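(* Let $\ell\ge 1$ and $n,m_1,\dots,m_\ell$ be positive integers, $m:=\sum_{i=1}^\ell m_i$. For $i=1,\dots,\ell$ let $C_i\subseteq\mathbb{R}^{m_i}$ be a nonempty closed convex set and $A_i\in\mathbb{R}^{m_i\times n}$ a nonzero matrix, and let $\bar v\in\mathbb{R}^n$. Assume $\bigcap_{i=1}^\ell A_i^{-1}\operatorname{ri}C_i\neq\emptyset$. Let $d(\mathbf y):=\frac12\|\sum_{i=1}^\ell A_i^Ty_i-\bar v\|^2-\frac12\|\bar v\|^2+\sum_{i=1}^\ell\sigma_{C_i}(y_i)$ for $\mathbf y=(y_1,\dots,y_\ell)\in\mathbb{R}^m$ and $d^*:=\inf d$. Let $\{\mathbf y^t\}$ be generated by the following algorithm: set $\gamma_i:=\lambda_{\max}(A_i^TA_i)$, $y_i^0:=0$, $x^0_\ell:=\bar v$; for $t=0,1,2,\dots$ set $x^{t+1}_0:=x^t_\ell$ and for $i=1,\dots,\ell$ compute $$x^{t+1}_i=(I-\gamma_i^{-1}A_i^TA_i)x^{t+1}_{i-1}+\gamma_i^{-1}A_i^T\operatorname{Proj}_{C_i}(\gamma_iy_i^t+A_ix^{t+1}_{i-1}),$$ $$y^{t+1}_i=y_i^t+\gamma_i^{-1}A_ix^{t+1}_{i-1}-\gamma_i^{-1}\operatorname{Proj}_{C_i}(\gamma_iy^t_i+A_ix^{t+1}_{i-1}),$$ then set $\mathbf y^{t+1}:=(y^{t+1}_1,\dots,y^{t+1}_\ell)$. Then $d(\mathbf y^t)\to d^*$ and $\operatorname{dist}(\mathbf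 y^t,\operatorname{Argmin} d)\to0$.
   Context: $A_i^{-1}S:=\{x: A_ix\in S\}$; $\operatorname{ri}$ denotes relative interior; $\sigma_C(y):=\sup_{u\in C}\langle y,u\rangle$ is the support function; $\operatorname{Proj}_C$ is the Euclidean projection onto $C$; $\lambda_{\max}$ is the largest eigenvalue; $\operatorname{Argmin} d$ is the set of minimizers of $d$. *)

theory Defs
  imports "HOL-Analysis.Analysis"
begin

definition support_fun :: "('a::real_inner) set \<Rightarrow> 'a \<Rightarrow> ereal" where
  "support_fun C y = (SUP u\<in>C. ereal (inner y u))"

definition lambda_max :: "real^'n^'n \<Rightarrow> real" where
  "lambda_max M = Max {lam. \<exists>v. v \<noteq> 0 \<and> M *v v = lam *\<^sub>R v}"

definition Proj :: "('a::euclidean_space) set \<Rightarrow> 'a \<Rightarrow> 'a" where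
  "Proj C x = closest_point C x"

text \<open>R^m is split into blocks R^{m_1} x ... x R^{m_l}: coordinate j of R^m
  belongs to block blk j.  R^{m_i} is identified with the coordinate subspace
  of vectors supported on block i; blk_restr extracts the i-th block y_i.\<close>
definition blk_restr :: "('m \<Rightarrow> nat) \<Rightarrow> nat \<Rightarrow> real^'m \<Rightarrow> real^'m" where
  "blk_restr blk i y = (\<chi> j. if blk j = i then y $ j else 0)"

definition blk_space :: "('m \<Rightarrow> nat) \<Rightarrow> nat \<Rightarrow> (real^'m) set" where
  "blk_space blk i = {y. \<forall>j. blk j \<noteq> i \<longrightarrow> y $ j = 0}"

definition Argmin :: "('a \<Rightarrow> 'b::order) \<Rightarrow> 'a set" where
  "Argmin f = {y. \<forall>z. f y \<le> f z}"

end

theory Submission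
  imports Defs
begin

text \<open>The iteration is a cyclic block coordinate descent on the dual function d. With
  x = vbar - sum_i A_i^T y_i, the update of block i is a projected gradient step of length 1/gam_i
  in y_i; as gam_i = lambda_max (A_i^T A_i) bounds |A_i^T u|^2 / |u|^2, it decreases d by at least
  gam_i/2 |y_i^(t+1) - y_i^t|^2, the support function at y_i^(t+1) being attained at the projected
  point. Weak duality bounds d from below, so these steps are square summable and tend to 0.

  A Slater point x_s makes d coercive up to a subspace of directions:
  d y >= 1/2 |A^T y - (vbar - x_s)|^2 - K + e |P y|, where P is the orthogonal projection onto the
  span of the sets C_i - A_i x_s. Hence the features (A^T y^t, P y^t) are bounded. Along every
  convergent subsequence of features the KKT conditions hold in the limit; they depend on y only
  through its feature, so every y with the limit feature is a minimiser. This gives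
  d y^t -> min d by monotonicity, and dist (y^t, Argmin d) -> 0 because every subsequence has a
  further subsequence along which it tends to 0.\<close>

lemma inner_transpose_mult:
  fixes A :: "real^'n^'m"
  shows "inner (transpose A *v u) z = inner u (A *v z)"
proof -
  have "transpose A *v u = u v* A"
    by (metis transpose_transpose vector_transpose_matrix)
  then show ?thesis by (simp add: dot_lmul_matrix)
qed

lemma linear_coeff_zero_if_quadratic_nonpos:
  fixes b c :: real
  assumes "\<And>s. 2 * s * c + s\<^sup>2 * b \<le> 0"
  shows "c = 0"
proof -
  define k where "k = \<bar>b\<bar> + 1"
  have "k > 0" by (simp add: k_def)
  have "k\<^sup>2 * (2 * (c / k) * c + (c / k)\<^sup>2 * b) = c * c * (2 * k + b)"
    using \<open>k > 0\<close> by (simp add: field_simps power2_eq_square)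
  moreover have "k\<^sup>2 * (2 * (c / k) * c + (c / k)\<^sup>2 * b) \<le> 0"
    using assms[of "c / k"] by (simp add: mult_nonneg_nonpos)
  moreover have "2 * k + b > 0" unfolding k_def by (simp add: abs_if)
  ultimately have "c * c \<le> 0" by (simp add: mult_le_0_iff)
  then show ?thesis by (metis mult_le_0_iff order_antisym_conv)
qed

lemma power2_norm_add_scaleR:
  fixes a b :: "'a::real_inner"
  shows "(norm (a + s *\<^sub>R b))\<^sup>2 = (norm a)\<^sup>2 + 2 * s * inner a b + s\<^sup>2 * (norm b)\<^sup>2"
  by (simp add: power2_norm_eq_inner inner_add_left inner_add_right inner_commute)
     (simp add: power2_eq_square algebra_simps)

lemma inner_gram:
  fixes A :: "real^'n^'m"
  shows "inner ((transpose A ** A) *v u) w = inner (A *v u) (A *v w)"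
  by (simp only: matrix_vector_mul_assoc[symmetric] inner_transpose_mult)

lemma rayleigh_max_eigenvector:
  fixes A :: "real^'n^'m"
  assumes bound: "\<And>z. (norm (A *v z))\<^sup>2 \<le> mu * (norm z)\<^sup>2"
    and u: "norm u = 1" "(norm (A *v u))\<^sup>2 = mu"
  shows "(transpose A ** A) *v u = mu *\<^sub>R u"
proof -
  have "inner (A *v u) (A *v w) - mu * inner u w = 0" for w
  proof (rule linear_coeff_zero_if_quadratic_nonpos)
    fix s :: real
    have "(norm (A *v u))\<^sup>2 + 2 * s * inner (A *v u) (A *v w) + s\<^sup>2 * (norm (A *v w))\<^sup>2
        \<le> mu * ((norm u)\<^sup>2 + 2 * s * inner u w + s\<^sup>2 * (norm w)\<^sup>2)"
      using bound[of "u + s *\<^sub>R w"]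
      by (simp only: matrix_vector_right_distrib matrix_vector_mult_scaleR power2_norm_add_scaleR)
    moreover have "2 * s * (inner (A *v u) (A *v w) - mu * inner u w)
        + s\<^sup>2 * ((norm (A *v w))\<^sup>2 - mu * (norm w)\<^sup>2)
      = (mu + 2 * s * inner (A *v u) (A *v w) + s\<^sup>2 * (norm (A *v w))\<^sup>2)
        - mu * (1 + 2 * s * inner u w + s\<^sup>2 * (norm w)\<^sup>2)"
      by (simp add: algebra_simps)
    ultimately show "2 * s * (inner (A *v u) (A *v w) - mu * inner u w)
        + s\<^sup>2 * ((norm (A *v w))\<^sup>2 - mu * (norm w)\<^sup>2) \<le> 0"
      using u by simp
  qed
  then have "inner ((transpose A ** A) *v u - mu *\<^sub>R u) w = 0" for w
    by (simp add: inner_diff_left inner_gram)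
  from this[of "(transpose A ** A) *v u - mu *\<^sub>R u"] show ?thesis by simp
qed

lemma finite_eigenvalues_symmetric:
  fixes M :: "real^'n^'n"
  assumes sym: "\<And>u w. inner (M *v u) w = inner u (M *v w)"
  shows "finite {lam. \<exists>v. v \<noteq> 0 \<and> M *v v = lam *\<^sub>R v}"
proof -
  let ?E = "{lam. \<exists>v. v \<noteq> 0 \<and> M *v v = lam *\<^sub>R v}"
  define f where "f lam = (SOME v. v \<noteq> 0 \<and> M *v v = lam *\<^sub>R v)" for lam
  have f: "f lam \<noteq> 0 \<and> M *v f lam = lam *\<^sub>R f lam" if "lam \<in> ?E" for lam
  proof -
    have "\<exists>v. v \<noteq> 0 \<and> M *v v = lam *\<^sub>R v" using that by simp
    then show ?thesis unfolding f_def by (rule someI_ex)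
  qed
  have inj: "inj_on f ?E"
  proof (rule inj_onI)
    fix a b assume a: "a \<in> ?E" and b: "b \<in> ?E" and "f a = f b"
    then have "a *\<^sub>R f a = b *\<^sub>R f a" using f[OF a] f[OF b] by metis
    then have "(a - b) *\<^sub>R f a = 0" by (simp add: scaleR_left_diff_distrib)
    then show "a = b" using f[OF a] by simp
  qed
  have "pairwise orthogonal (f ` ?E)"
  proof (rule pairwise_imageI)
    fix a b assume a: "a \<in> ?E" and b: "b \<in> ?E" and "f a \<noteq> f b"
    then have "a \<noteq> b" by auto
    have "a * inner (f a) (f b) = b * inner (f a) (f b)"
      using sym[of "f a" "f b"] f[OF a] f[OF b] by simp
    then show "orthogonal (f a) (f b)" using \<open>a \<noteq> b\<close> by (simp add: orthogonal_def)
  qed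
  moreover have "0 \<notin> f ` ?E" using f by force
  ultimately have "independent (f ` ?E)" using pairwise_orthogonal_independent by blast
  then have "finite (f ` ?E)" using independent_bound by blast
  then show ?thesis using inj finite_imageD by blast
qed

lemma gram_eigenvalue_bound:
  fixes A :: "real^'n^'m"
  obtains mu where "\<exists>v. v \<noteq> 0 \<and> (transpose A ** A) *v v = mu *\<^sub>R v"
    and "\<And>z. (norm (A *v z))\<^sup>2 \<le> mu * (norm z)\<^sup>2"
proof -
  let ?q = "\<lambda>z. (norm (A *v z))\<^sup>2"
  have "continuous_on (sphere 0 1) ?q" by (intro continuous_intros)
  moreover have "sphere (0::real^'n) 1 \<noteq> {}" by simp
  ultimately obtain u where u: "u \<in> sphere 0 1" and max: "\<And>z. z \<in> sphere 0 1 \<Longrightarrow> ?q z \<le> ?q u"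
    using continuous_attains_sup[OF compact_sphere] by blast
  have bound: "?q z \<le> ?q u * (norm z)\<^sup>2" for z
  proof (cases "z = 0")
    case False
    then have "?q ((1 / norm z) *\<^sub>R z) \<le> ?q u" by (intro max) simp
    then show ?thesis using False
      by (simp add: matrix_vector_mult_scaleR power_divide divide_le_eq mult.commute)
  qed simp
  have "norm u = 1" using u by simp
  then have "(transpose A ** A) *v u = ?q u *\<^sub>R u"
    using bound by (intro rayleigh_max_eigenvector) simp_all
  moreover have "u \<noteq> 0" using \<open>norm u = 1\<close> by auto
  ultimately show ?thesis using that bound by blast
qed

lemma norm_transpose_mult_sq_le:
  fixes A :: "real^'n^'m"
  assumes bound: "\<And>z. (norm (A *v z))\<^sup>2 \<le> mu * (norm z)\<^sup>2" and "mu \<ge> 0"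
  shows "(norm (transpose A *v u))\<^sup>2 \<le> mu * (norm u)\<^sup>2"
proof -
  define z where "z = transpose A *v u"
  have "(norm z)\<^sup>2 = inner u (A *v z)"
    unfolding z_def power2_norm_eq_inner by (rule inner_transpose_mult)
  also have "\<dots> \<le> norm u * norm (A *v z)" by (rule norm_cauchy_schwarz)
  finally have "((norm z)\<^sup>2)\<^sup>2 \<le> (norm u * norm (A *v z))\<^sup>2"
    by (rule power_mono) simp
  also have "\<dots> = (norm u)\<^sup>2 * (norm (A *v z))\<^sup>2" by (rule power_mult_distrib)
  also have "\<dots> \<le> (norm u)\<^sup>2 * (mu * (norm z)\<^sup>2)" using bound[of z] by (simp add: mult_left_mono)
  finally have le: "(norm z)\<^sup>2 * (norm z)\<^sup>2 \<le> (mu * (norm u)\<^sup>2) * (norm z)\<^sup>2"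
    by (simp add: power2_eq_square algebra_simps)
  show ?thesis
  proof (cases "z = 0")
    case False
    then have "(norm z)\<^sup>2 > 0" by simp
    with le show ?thesis unfolding z_def by (simp only: mult_le_cancel_right)
  qed (use \<open>mu \<ge> 0\<close> z_def in simp)
qed

lemma lambda_max_gram:
  fixes A :: "real^'n^'m"
  assumes "A \<noteq> 0"
  shows "lambda_max (transpose A ** A) > 0"
    and "(norm (transpose A *v u))\<^sup>2 \<le> lambda_max (transpose A ** A) * (norm u)\<^sup>2"
proof -
  let ?M = "transpose A ** A"
  obtain mu where eig: "\<exists>v. v \<noteq> 0 \<and> ?M *v v = mu *\<^sub>R v"
    and bound: "\<And>z. (norm (A *v z))\<^sup>2 \<le> mu * (norm z)\<^sup>2"
    using gram_eigenvalue_bound[of A] by blast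
  have "inner (?M *v u) w = inner u (?M *v w)" for u w
    using inner_gram[of A u w] inner_gram[of A w u] by (simp add: inner_commute)
  then have "mu \<le> lambda_max ?M"
    unfolding lambda_max_def using eig by (intro Max_ge finite_eigenvalues_symmetric) auto
  obtain z where "A *v z \<noteq> 0"
    using assms by (auto simp: matrix_eq)
  then have "0 < mu"
    using bound[of z] by (smt (verit) mult_nonpos_nonneg zero_le_power2 zero_less_power2 norm_eq_zero)
  then show "lambda_max ?M > 0" using \<open>mu \<le> lambda_max ?M\<close> by linarith
  have "(norm (A *v z))\<^sup>2 \<le> lambda_max ?M * (norm z)\<^sup>2" for z
    using bound[of z] \<open>mu \<le> lambda_max ?M\<close> by (smt (verit) mult_right_mono zero_le_power2)
  then show "(norm (transpose A *v u))\<^sup>2 \<le> lambda_max ?M * (norm u)\<^sup>2"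
    using \<open>0 < mu\<close> \<open>mu \<le> lambda_max ?M\<close> by (intro norm_transpose_mult_sq_le) simp_all
qed

declare transpose_matrix_vector[simp del]

lemma blk_restr_nth: "blk_restr blk i z $ j = (if blk j = i then z $ j else 0)"
  by (simp add: blk_restr_def)

lemma linear_blk_restr: "linear (blk_restr blk i)"
  by (rule linearI) (simp_all add: vec_eq_iff blk_restr_nth)

lemma blk_restr_in_blk_space: "blk_restr blk i z \<in> blk_space blk i"
  by (simp add: blk_space_def blk_restr_nth)

lemma blk_restr_blk_space:
  "w \<in> blk_space blk j \<Longrightarrow> blk_restr blk i w = (if i = j then w else 0)"
  by (auto simp: vec_eq_iff blk_restr_nth blk_space_def)

lemma inner_blk_restr: "w \<in> blk_space blk i \<Longrightarrow> inner (blk_restr blk i z) w = inner z w"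
  by (auto simp: inner_vec_def blk_restr_nth blk_space_def intro!: sum.cong)

lemma subspace_blk_space: "subspace (blk_space blk i)"
  by (auto simp: subspace_def blk_space_def)

lemma sum_blk_restr:
  assumes "finite I" "\<And>j. blk j \<in> I"
  shows "(\<Sum>i\<in>I. blk_restr blk i z) = z"
  using assms by (simp add: vec_eq_iff sum_component blk_restr_nth)

lemma norm_blk_restr_le: "norm (blk_restr blk i z) \<le> norm z"
  by (rule norm_le_componentwise_cart) (simp add: blk_restr_nth)

lemma support_fun_ge: "c \<in> S \<Longrightarrow> ereal (inner w c) \<le> support_fun S w"
  unfolding support_fun_def by (rule SUP_upper)

lemma support_fun_attained:
  assumes "p \<in> S" "\<And>c. c \<in> S \<Longrightarrow> inner w c \<le> inner w p"
  shows "support_fun S w = ereal (inner w p)"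
proof (rule antisym)
  show "support_fun S w \<le> ereal (inner w p)"
    unfolding support_fun_def using assms(2) by (intro SUP_least) simp
qed (rule support_fun_ge[OF assms(1)])

lemma support_fun_zero: "S \<noteq> {} \<Longrightarrow> support_fun S 0 = 0"
  unfolding support_fun_def by (simp add: zero_ereal_def)

lemma orthogonal_projection_exists:
  fixes V :: "'a::euclidean_space set"
  assumes "subspace V"
  obtains P where "linear P" "\<And>z. P z \<in> V" "\<And>z w. w \<in> V \<Longrightarrow> inner (P z) w = inner z w"
proof -
  obtain B where B: "B \<subseteq> V" "pairwise orthogonal B" "\<And>b. b \<in> B \<Longrightarrow> norm b = 1"
      "independent B" "card B = dim V" "span B = V"
    by (rule orthonormal_basis_subspace[OF assms]) auto
  have "finite B" using B(4) independent_bound by blast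
  define P where "P z = (\<Sum>b\<in>B. inner z b *\<^sub>R b)" for z
  have "linear P"
    unfolding P_def
    by (rule linearI) (simp_all add: inner_add_left scaleR_add_left sum.distrib scaleR_sum_right)
  moreover have "P z \<in> V" for z
    unfolding P_def B(6)[symmetric] by (intro span_sum span_scale span_base)
  moreover have "inner (P z) w = inner z w" if "w \<in> V" for z w
  proof -
    have "inner (P z) b = inner z b" if b: "b \<in> B" for b
    proof -
      have "inner (P z) b = (\<Sum>b'\<in>B. inner z b' * inner b' b)"
        by (simp add: P_def inner_sum_left)
      also have "\<dots> = inner z b * inner b b + (\<Sum>b'\<in>B - {b}. inner z b' * inner b' b)"
        using b \<open>finite B\<close> by (simp add: sum.remove)
      also have "(\<Sum>b'\<in>B - {b}. inner z b' * inner b' b) = 0"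
        using B(2) b by (intro sum.neutral) (auto simp: pairwise_def orthogonal_def)
      finally show ?thesis using B(3)[OF b] by (simp add: norm_eq_1)
    qed
    then have "orthogonal (z - P z) w"
      using that B(6) by (intro orthogonal_to_span[of w B]) (auto simp: orthogonal_def inner_diff_left)
    then show ?thesis by (simp add: orthogonal_def inner_diff_left)
  qed
  ultimately show ?thesis using that by blast
qed

lemma LIMSEQ_if_subsubsequences:
  fixes X :: "nat \<Rightarrow> 'a::topological_space"
  assumes "\<And>r :: nat \<Rightarrow> nat. strict_mono r
    \<Longrightarrow> \<exists>r' :: nat \<Rightarrow> nat. strict_mono r' \<and> (\<lambda>k. X (r (r' k))) \<longlonglongrightarrow> L"
  shows "X \<longlonglongrightarrow> L"
proof (rule topological_tendstoI)
  fix S assume "open S" "L \<in> S"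
  show "eventually (\<lambda>t. X t \<in> S) sequentially"
  proof (rule ccontr)
    assume "\<not> ?thesis"
    then have "infinite {t. X t \<notin> S}"
      by (simp add: not_eventually frequently_cofinite[symmetric] cofinite_eq_sequentially)
    then obtain r :: "nat \<Rightarrow> nat" where r: "strict_mono r" "\<And>k. X (r k) \<notin> S"
      using infinite_enumerate by blast
    then obtain r' where "(\<lambda>k. X (r (r' k))) \<longlonglongrightarrow> L" using assms[OF r(1)] by blast
    then have "eventually (\<lambda>k. X (r (r' k)) \<in> S) sequentially"
      using \<open>open S\<close> \<open>L \<in> S\<close> by (rule topological_tendstoD)
    then show False using r(2) by simp
  qed
qed

locale block_dual =
  fixes l :: nat
    and blk :: "'m::finite \<Rightarrow> nat"
    and C :: "nat \<Rightarrow> (real^'m) set"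
    and A :: "nat \<Rightarrow> real^'n::finite^'m"
    and vbar :: "real^'n"
    and d :: "real^'m \<Rightarrow> ereal"
  assumes blk_range: "\<forall>j. blk j \<in> {1..l}"
    and C_block: "\<forall>i\<in>{1..l}. C i \<subseteq> blk_space blk i"
    and A_block: "\<forall>i\<in>{1..l}. \<forall>j. blk j \<noteq> i \<longrightarrow> A i $ j = 0"
    and slater: "(\<Inter>i\<in>{1..l}. {z. A i *v z \<in> rel_interior (C i)}) \<noteq> {}"
    and d_def: "\<forall>yy. d yy = ereal ((1/2) * (norm ((\<Sum>i\<in>{1..l}. transpose (A i) *v blk_restr blk i yy) - vbar))\<^sup>2
                                  - (1/2) * (norm vbar)\<^sup>2)
                         + (\<Sum>i\<in>{1..l}. support_fun (C i) (blk_restr blk i yy))"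
begin

definition AT :: "real^'m \<Rightarrow> real^'n" where
  "AT z = (\<Sum>i\<in>{1..l}. transpose (A i) *v blk_restr blk i z)"

lemma d_eq: "d z = ereal ((1/2) * (norm (AT z - vbar))\<^sup>2 - (1/2) * (norm vbar)\<^sup>2)
    + (\<Sum>i\<in>{1..l}. support_fun (C i) (blk_restr blk i z))"
  using d_def by (simp add: AT_def)

lemma linear_AT: "linear AT"
  unfolding AT_def
  by (intro linear_compose_sum ballI linear_compose[OF linear_blk_restr matrix_vector_mul_linear,
        unfolded o_def])

lemma inner_AT: "inner (AT z) u = (\<Sum>i\<in>{1..l}. inner (blk_restr blk i z) (A i *v u))"
  by (simp add: AT_def inner_sum_left inner_transpose_mult)

lemma A_mult_in_blk_space: "i \<in> {1..l} \<Longrightarrow> A i *v u \<in> blk_space blk i"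
  using A_block by (auto simp: blk_space_def matrix_vector_mult_def)

lemma C_in_blk_space: "i \<in> {1..l} \<Longrightarrow> c \<in> C i \<Longrightarrow> c \<in> blk_space blk i"
  using C_block by auto

lemma d_ge_weak_duality:
  assumes feasible: "\<forall>i\<in>{1..l}. A i *v u \<in> C i"
  shows "ereal (-(1/2) * (norm (vbar - u))\<^sup>2) \<le> d z"
proof -
  have "-(1/2) * (norm (vbar - u))\<^sup>2
      \<le> (1/2) * (norm (AT z - vbar))\<^sup>2 - (1/2) * (norm vbar)\<^sup>2 + inner (AT z) u"
  proof -
    have "0 \<le> (1/2) * (norm (AT z - vbar + u))\<^sup>2" by simp
    then show ?thesis
      by (simp add: power2_norm_eq_inner inner_diff_left inner_diff_right inner_add_left
          inner_add_right inner_commute algebra_simps)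
  qed
  then have "ereal (-(1/2) * (norm (vbar - u))\<^sup>2)
      \<le> ereal ((1/2) * (norm (AT z - vbar))\<^sup>2 - (1/2) * (norm vbar)\<^sup>2) + ereal (inner (AT z) u)"
    by simp
  also have "ereal (inner (AT z) u) \<le> (\<Sum>i\<in>{1..l}. support_fun (C i) (blk_restr blk i z))"
    unfolding inner_AT sum_ereal[symmetric] using feasible by (intro sum_mono support_fun_ge) blast
  finally show ?thesis unfolding d_eq by (simp add: add_left_mono)
qed

definition x_slater :: "real^'n" where
  "x_slater = (SOME u. \<forall>i\<in>{1..l}. A i *v u \<in> rel_interior (C i))"

lemma x_slater_rel_interior: "i \<in> {1..l} \<Longrightarrow> A i *v x_slater \<in> rel_interior (C i)"
  using someI_ex[of "\<lambda>u. \<forall>i\<in>{1..l}. A i *v u \<in> rel_interior (C i)"] slater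
  unfolding x_slater_def by blast

lemma x_slater_feasible: "i \<in> {1..l} \<Longrightarrow> A i *v x_slater \<in> C i"
  using x_slater_rel_interior rel_interior_subset by blast

definition dirs :: "nat \<Rightarrow> (real^'m) set" where
  "dirs i = (\<lambda>c. - (A i *v x_slater) + c) ` C i"

definition dir_space :: "(real^'m) set" where
  "dir_space = span (\<Union>i\<in>{1..l}. dirs i)"

lemma diff_in_dir_space:
  assumes "i \<in> {1..l}" "c \<in> C i" "c' \<in> C i"
  shows "c - c' \<in> dir_space"
proof -
  have "- (A i *v x_slater) + c \<in> dir_space" "- (A i *v x_slater) + c' \<in> dir_space"
    unfolding dir_space_def dirs_def using assms by (auto intro!: span_base)
  then have "(- (A i *v x_slater) + c) - (- (A i *v x_slater) + c') \<in> dir_space"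
    unfolding dir_space_def by (rule span_diff)
  then show ?thesis by simp
qed

lemma blk_restr_dir_space:
  assumes i: "i \<in> {1..l}" and w: "w \<in> dir_space"
  shows "blk_restr blk i w \<in> span (dirs i)"
proof -
  have "dirs j \<subseteq> blk_space blk j" if j: "j \<in> {1..l}" for j
    using subspace_diff[OF subspace_blk_space C_in_blk_space[OF j] A_mult_in_blk_space[OF j]]
    unfolding dirs_def by auto
  then have "blk_restr blk i ` (\<Union>j\<in>{1..l}. dirs j) \<subseteq> span (dirs i)"
    by (force simp: blk_restr_blk_space span_base span_zero)
  then have "span (blk_restr blk i ` (\<Union>j\<in>{1..l}. dirs j)) \<subseteq> span (dirs i)"
    by (simp add: span_minimal)
  moreover have "blk_restr blk i w \<in> span (blk_restr blk i ` (\<Union>j\<in>{1..l}. dirs j))"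
    using w unfolding dir_space_def span_linear_image[OF linear_blk_restr] by blast
  ultimately show ?thesis by blast
qed

lemma slater_ball:
  assumes i: "i \<in> {1..l}"
  obtains e where "e > 0" "\<And>w. w \<in> span (dirs i) \<Longrightarrow> norm w \<le> e \<Longrightarrow> A i *v x_slater + w \<in> C i"
proof -
  obtain e where e: "e > 0" "cball (A i *v x_slater) e \<inter> affine hull (C i) \<subseteq> C i"
    using x_slater_rel_interior[OF i] unfolding mem_rel_interior_cball by blast
  have "affine hull (C i) = (\<lambda>w. A i *v x_slater + w) ` span (dirs i)"
    unfolding dirs_def
    by (rule affine_hull_span_gen) (use x_slater_feasible[OF i] in \<open>rule hull_inc\<close>)
  then show ?thesis
    using that[OF e(1)] e(2) by (force simp: dist_norm)
qed

lemma slater_radius: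
  obtains e where "e > 0"
    "\<And>i w. i \<in> {1..l} \<Longrightarrow> w \<in> span (dirs i) \<Longrightarrow> norm w \<le> e \<Longrightarrow> A i *v x_slater + w \<in> C i"
proof -
  have "\<forall>i\<in>{1..l}. \<exists>e. e > 0 \<and> (\<forall>w\<in>span (dirs i). norm w \<le> e \<longrightarrow> A i *v x_slater + w \<in> C i)"
  proof
    fix i assume "i \<in> {1..l}"
    obtain e where "e > 0"
      "\<And>w. w \<in> span (dirs i) \<Longrightarrow> norm w \<le> e \<Longrightarrow> A i *v x_slater + w \<in> C i"
      using slater_ball[OF \<open>i \<in> {1..l}\<close>] by blast
    then show "\<exists>e. e > 0 \<and> (\<forall>w\<in>span (dirs i). norm w \<le> e \<longrightarrow> A i *v x_slater + w \<in> C i)"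
      by (intro exI[of _ e]) simp
  qed
  from bchoice[OF this] obtain f where
    f: "\<forall>i\<in>{1..l}. f i > 0 \<and> (\<forall>w\<in>span (dirs i). norm w \<le> f i \<longrightarrow> A i *v x_slater + w \<in> C i)"
    by blast
  define e where "e = Min (insert 1 (f ` {1..l}))"
  show ?thesis
  proof (rule that)
    show "e > 0" unfolding e_def using f by simp
    fix i w assume "i \<in> {1..l}" "w \<in> span (dirs i)" "norm w \<le> e"
    moreover have "e \<le> f i" unfolding e_def using \<open>i \<in> {1..l}\<close> by (intro Min_le) auto
    ultimately show "A i *v x_slater + w \<in> C i" using f by force
  qed
qed

definition proj_dir :: "real^'m \<Rightarrow> real^'m" where
  "proj_dir = (SOME P. linear P \<and> (\<forall>z. P z \<in> dir_space)
     \<and> (\<forall>z w. w \<in> dir_space \<longrightarrow> inner (P z) w = inner z w))"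

lemma proj_dir:
  shows linear_proj_dir: "linear proj_dir"
    and proj_dir_in: "proj_dir z \<in> dir_space"
    and inner_proj_dir: "w \<in> dir_space \<Longrightarrow> inner (proj_dir z) w = inner z w"
proof -
  obtain P where "linear P" "\<And>z. P z \<in> dir_space"
    "\<And>z w. w \<in> dir_space \<Longrightarrow> inner (P z) w = inner z w"
    using orthogonal_projection_exists[OF subspace_span] unfolding dir_space_def by metis
  then have "\<exists>P. linear P \<and> (\<forall>z. P z \<in> dir_space)
      \<and> (\<forall>z w. w \<in> dir_space \<longrightarrow> inner (P z) w = inner z w)"
    by (intro exI[of _ P]) simp
  then have "linear proj_dir \<and> (\<forall>z. proj_dir z \<in> dir_space)
      \<and> (\<forall>z w. w \<in> dir_space \<longrightarrow> inner (proj_dir z) w = inner z w)"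
    unfolding proj_dir_def by (rule someI_ex)
  then show "linear proj_dir" "proj_dir z \<in> dir_space"
    "w \<in> dir_space \<Longrightarrow> inner (proj_dir z) w = inner z w"
    by simp_all
qed

lemma inner_blk_restr_diff:
  assumes "i \<in> {1..l}" "c \<in> C i" "c' \<in> C i"
  shows "inner (blk_restr blk i z) (c - c') = inner (proj_dir z) (c - c')"
proof -
  have "c - c' \<in> blk_space blk i"
    using assms by (intro subspace_diff subspace_blk_space C_in_blk_space)
  then show ?thesis using inner_blk_restr inner_proj_dir[OF diff_in_dir_space[OF assms]] by simp
qed

lemma sum_support_fun_ge_slater:
  assumes "e > 0"
    and radius: "\<And>i w. i \<in> {1..l} \<Longrightarrow> w \<in> span (dirs i) \<Longrightarrow> norm w \<le> e
      \<Longrightarrow> A i *v x_slater + w \<in> C i"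
  shows "ereal (inner (AT z) x_slater + e * norm (proj_dir z))
    \<le> (\<Sum>i\<in>{1..l}. support_fun (C i) (blk_restr blk i z))"
proof -
  txt \<open>Test each support function at the point A_i x_s + u_i of C_i, where u is the vector
    of length e in the direction of proj_dir z.\<close>
  define u where "u = (if proj_dir z = 0 then 0 else (e / norm (proj_dir z)) *\<^sub>R proj_dir z)"
  have "u \<in> dir_space" unfolding u_def using proj_dir_in
    by (simp add: dir_space_def span_zero span_scale)
  have "norm u \<le> e" unfolding u_def using \<open>e > 0\<close> by auto
  have "inner z (proj_dir z) = (norm (proj_dir z))\<^sup>2"
    using inner_proj_dir[OF proj_dir_in, of z z] by (simp add: power2_norm_eq_inner)
  then have "inner z u = e * norm (proj_dir z)"
    by (simp add: u_def power2_eq_square field_simps)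
  have each: "ereal (inner (blk_restr blk i z) (A i *v x_slater) + inner z (blk_restr blk i u))
      \<le> support_fun (C i) (blk_restr blk i z)" if i: "i \<in> {1..l}" for i
  proof -
    have "A i *v x_slater + blk_restr blk i u \<in> C i"
      using radius[OF i blk_restr_dir_space[OF i \<open>u \<in> dir_space\<close>]]
        norm_blk_restr_le[of blk i u] \<open>norm u \<le> e\<close> by simp
    from support_fun_ge[OF this, of "blk_restr blk i z"] show ?thesis
      by (simp add: inner_add_right inner_blk_restr[OF blk_restr_in_blk_space])
  qed
  have "ereal (inner (AT z) x_slater + inner z u)
      = (\<Sum>i\<in>{1..l}. ereal (inner (blk_restr blk i z) (A i *v x_slater)
          + inner z (blk_restr blk i u)))"
    using blk_range
    by (simp add: sum_ereal sum.distrib inner_AT inner_sum_right[symmetric] sum_blk_restr)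
  also have "\<dots> \<le> (\<Sum>i\<in>{1..l}. support_fun (C i) (blk_restr blk i z))"
    by (intro sum_mono each) assumption
  finally show ?thesis unfolding \<open>inner z u = e * norm (proj_dir z)\<close> .
qed

lemma d_ge_coercive:
  obtains e where "e > 0"
    "\<And>z. ereal ((1/2) * (norm (AT z - vbar))\<^sup>2 - (1/2) * (norm vbar)\<^sup>2 + inner (AT z) x_slater
       + e * norm (proj_dir z)) \<le> d z"
proof -
  obtain e where e: "e > 0"
    "\<And>i w. i \<in> {1..l} \<Longrightarrow> w \<in> span (dirs i) \<Longrightarrow> norm w \<le> e \<Longrightarrow> A i *v x_slater + w \<in> C i"
    using slater_radius by blast
  have "ereal ((1/2) * (norm (AT z - vbar))\<^sup>2 - (1/2) * (norm vbar)\<^sup>2 + inner (AT z) x_slater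
       + e * norm (proj_dir z)) \<le> d z" for z
  proof -
    have "ereal ((1/2) * (norm (AT z - vbar))\<^sup>2 - (1/2) * (norm vbar)\<^sup>2)
        + ereal (inner (AT z) x_slater + e * norm (proj_dir z))
        \<le> ereal ((1/2) * (norm (AT z - vbar))\<^sup>2 - (1/2) * (norm vbar)\<^sup>2)
        + (\<Sum>i\<in>{1..l}. support_fun (C i) (blk_restr blk i z))"
      using sum_support_fun_ge_slater[OF e] by (rule add_left_mono)
    then show ?thesis unfolding d_eq by (simp add: add.assoc)
  qed
  with e(1) show ?thesis using that by blast
qed

definition feature :: "real^'m \<Rightarrow> (real^'n) \<times> (real^'m)" where
  "feature z = (AT z, proj_dir z)"

lemma linear_feature: "linear feature"
  unfolding feature_def using linear_AT linear_proj_dir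
  by (intro linearI) (simp_all add: linear_add linear_scale)

lemma bounded_linear_feature: "bounded_linear feature"
  using linear_feature linear_conv_bounded_linear by blast

text \<open>The KKT conditions of d at z, with primal point vbar - AT z, stated on feature z: they see
  z only through inner products of its blocks with differences of points of C_i.\<close>
definition kkt :: "(real^'n) \<times> (real^'m) \<Rightarrow> bool" where
  "kkt q \<longleftrightarrow> (\<forall>i\<in>{1..l}. A i *v (vbar - fst q) \<in> C i)
     \<and> (\<forall>i\<in>{1..l}. \<forall>c\<in>C i. inner (snd q) (c - A i *v (vbar - fst q)) \<le> 0)"

lemma kkt_d_eq:
  assumes "kkt (feature z)"
  shows "d z = ereal (-(1/2) * (norm (AT z))\<^sup>2)"
proof -
  define u where "u = vbar - AT z"
  have feasible: "\<forall>i\<in>{1..l}. A i *v u \<in> C i"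
    and normal: "\<forall>i\<in>{1..l}. \<forall>c\<in>C i. inner (proj_dir z) (c - A i *v u) \<le> 0"
    using assms unfolding kkt_def feature_def u_def by simp_all
  have "support_fun (C i) (blk_restr blk i z) = ereal (inner (blk_restr blk i z) (A i *v u))"
    if i: "i \<in> {1..l}" for i
  proof (rule support_fun_attained)
    fix c assume c: "c \<in> C i"
    have "inner (blk_restr blk i z) (c - A i *v u) \<le> 0"
      using inner_blk_restr_diff[OF i c] feasible normal i c by simp
    then show "inner (blk_restr blk i z) c \<le> inner (blk_restr blk i z) (A i *v u)"
      by (simp add: inner_diff_right)
  qed (use feasible i in blast)
  then have "(\<Sum>i\<in>{1..l}. support_fun (C i) (blk_restr blk i z)) = ereal (inner (AT z) u)"
    by (simp add: sum_ereal inner_AT)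
  moreover have "(1/2) * (norm (AT z - vbar))\<^sup>2 - (1/2) * (norm vbar)\<^sup>2 + inner (AT z) u
      = -(1/2) * (norm (AT z))\<^sup>2"
    unfolding u_def
    by (simp add: power2_norm_eq_inner inner_diff_left inner_diff_right inner_commute algebra_simps)
  ultimately show ?thesis unfolding d_eq by simp
qed

lemma kkt_Argmin:
  assumes "kkt (feature z)"
  shows "z \<in> Argmin d"
proof -
  have "\<forall>i\<in>{1..l}. A i *v (vbar - AT z) \<in> C i"
    using assms unfolding kkt_def feature_def by simp
  from d_ge_weak_duality[OF this] show ?thesis
    using kkt_d_eq[OF assms] by (simp add: Argmin_def)
qed

lemma infdist_Argmin_le:
  obtains G :: "(real^'n) \<times> (real^'m) \<Rightarrow> real^'m" where "bounded_linear G"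
    "\<And>z z'. kkt (feature z') \<Longrightarrow> infdist z (Argmin d) \<le> norm (G (feature z - feature z'))"
proof -
  obtain G where G: "linear G" "\<And>q. q \<in> range feature \<Longrightarrow> feature (G q) = q"
    using linear_exists_right_inverse_on[OF linear_feature subspace_UNIV] by blast
  have "infdist z (Argmin d) \<le> norm (G (feature z - feature z'))" if "kkt (feature z')" for z z'
  proof -
    have "feature z - feature z' \<in> range feature"
      by (metis linear_diff[OF linear_feature] rangeI)
    then have "feature (z - G (feature z - feature z')) = feature z'"
      using G(2) by (simp add: linear_diff[OF linear_feature])
    then have "z - G (feature z - feature z') \<in> Argmin d"
      using kkt_Argmin that by metis
    then have "infdist z (Argmin d) \<le> dist z (z - G (feature z - feature z'))" by (rule infdist_le)
    then show ?thesis by (simp add: dist_norm)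
  qed
  with G(1) show ?thesis using that linear_conv_bounded_linear by blast
qed

end

locale block_iteration = block_dual l blk C A vbar d
  for l :: nat
    and blk :: "'m::finite \<Rightarrow> nat"
    and C :: "nat \<Rightarrow> (real^'m) set"
    and A :: "nat \<Rightarrow> real^'n::finite^'m"
    and vbar :: "real^'n"
    and d :: "real^'m \<Rightarrow> ereal" +
  fixes gam :: "nat \<Rightarrow> real"
    and x :: "nat \<Rightarrow> nat \<Rightarrow> real^'n"
    and y :: "nat \<Rightarrow> nat \<Rightarrow> real^'m"
    and Y :: "nat \<Rightarrow> real^'m"
  assumes C_ne: "\<forall>i\<in>{1..l}. C i \<noteq> {}"
    and C_closed: "\<forall>i\<in>{1..l}. closed (C i)"
    and C_convex: "\<forall>i\<in>{1..l}. convex (C i)"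
    and A_nz: "\<forall>i\<in>{1..l}. A i \<noteq> 0"
    and gam_def: "\<forall>i\<in>{1..l}. gam i = lambda_max (transpose (A i) ** A i)"
    and y_init: "\<forall>i\<in>{1..l}. y 0 i = 0"
    and x_init: "x 0 l = vbar"
    and x_start: "\<forall>t. x (Suc t) 0 = x t l"
    and x_step: "\<forall>t. \<forall>i\<in>{1..l}.
        x (Suc t) i = (x (Suc t) (i - 1) - (1 / gam i) *\<^sub>R (transpose (A i) *v (A i *v x (Suc t) (i - 1))))
          + (1 / gam i) *\<^sub>R (transpose (A i) *v Proj (C i) (gam i *\<^sub>R y t i + A i *v x (Suc t) (i - 1)))"
    and y_step: "\<forall>t. \<forall>i\<in>{1..l}.
        y (Suc t) i = y t i + (1 / gam i) *\<^sub>R (A i *v x (Suc t) (i - 1))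
          - (1 / gam i) *\<^sub>R Proj (C i) (gam i *\<^sub>R y t i + A i *v x (Suc t) (i - 1))"
    and Y_def: "\<forall>t. Y t = (\<Sum>i\<in>{1..l}. y t i)"
begin

definition proj_pt :: "nat \<Rightarrow> nat \<Rightarrow> real^'m" where
  "proj_pt t i = Proj (C i) (gam i *\<^sub>R y t i + A i *v x (Suc t) (i - 1))"

definition dy :: "nat \<Rightarrow> nat \<Rightarrow> real^'m" where
  "dy t i = y (Suc t) i - y t i"

lemma gam_pos: "i \<in> {1..l} \<Longrightarrow> gam i > 0"
  using lambda_max_gram(1)[of "A i"] gam_def A_nz by simp

lemma norm_transpose_le_gam:
  "i \<in> {1..l} \<Longrightarrow> (norm (transpose (A i) *v u))\<^sup>2 \<le> gam i * (norm u)\<^sup>2"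
  using lambda_max_gram(2)[of "A i"] gam_def A_nz by simp

lemma proj_pt_in: "i \<in> {1..l} \<Longrightarrow> proj_pt t i \<in> C i"
  unfolding proj_pt_def Proj_def using C_closed C_ne by (simp add: closest_point_in_set)

lemma dy_eq: "i \<in> {1..l} \<Longrightarrow> dy t i = (1 / gam i) *\<^sub>R (A i *v x (Suc t) (i - 1) - proj_pt t i)"
  using y_step by (simp add: dy_def proj_pt_def scaleR_diff_right)

lemma gam_dy:
  assumes "i \<in> {1..l}"
  shows "gam i *\<^sub>R dy t i = A i *v x (Suc t) (i - 1) - proj_pt t i"
  using dy_eq[OF assms, of t] gam_pos[OF assms] by simp

lemma y_in_blk_space: "i \<in> {1..l} \<Longrightarrow> y t i \<in> blk_space blk i"
proof (induction t)
  case 0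
  then show ?case using y_init by (simp add: blk_space_def)
next
  case (Suc t)
  have "A i *v x (Suc t) (i - 1) - proj_pt t i \<in> blk_space blk i"
    using Suc.prems by (intro subspace_diff subspace_blk_space A_mult_in_blk_space C_in_blk_space proj_pt_in)
  then have "dy t i \<in> blk_space blk i"
    unfolding dy_eq[OF Suc.prems] by (intro subspace_scale subspace_blk_space)
  moreover have "y (Suc t) i = y t i + dy t i" by (simp add: dy_def)
  ultimately show ?case
    using Suc.IH[OF Suc.prems] by (simp add: subspace_add subspace_blk_space)
qed

lemma x_Suc_block:
  assumes i: "i \<in> {1..l}"
  shows "x (Suc t) i = x (Suc t) (i - 1) - transpose (A i) *v dy t i"
proof -
  have dy: "transpose (A i) *v dy t i
      = (1 / gam i) *\<^sub>R (transpose (A i) *v (A i *v x (Suc t) (i - 1)))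
        - (1 / gam i) *\<^sub>R (transpose (A i) *v proj_pt t i)"
    unfolding dy_eq[OF i]
    by (simp only: matrix_vector_mult_scaleR matrix_vector_mult_diff_distrib scaleR_diff_right)
  have x: "x (Suc t) i = (x (Suc t) (i - 1)
      - (1 / gam i) *\<^sub>R (transpose (A i) *v (A i *v x (Suc t) (i - 1))))
      + (1 / gam i) *\<^sub>R (transpose (A i) *v proj_pt t i)"
    using x_step i unfolding proj_pt_def by blast
  show ?thesis unfolding dy x by (simp add: algebra_simps)
qed

lemma blk_restr_Y: "i \<in> {1..l} \<Longrightarrow> blk_restr blk i (Y t) = y t i"
proof -
  assume i: "i \<in> {1..l}"
  have "blk_restr blk i (Y t) = (\<Sum>j\<in>{1..l}. blk_restr blk i (y t j))"
    using Y_def by (simp add: linear_sum[OF linear_blk_restr])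
  also have "\<dots> = (\<Sum>j\<in>{1..l}. if i = j then y t j else 0)"
    by (intro sum.cong refl) (simp add: blk_restr_blk_space[OF y_in_blk_space])
  finally show ?thesis using i by simp
qed

lemma AT_Y: "AT (Y t) = (\<Sum>i\<in>{1..l}. transpose (A i) *v y t i)"
  unfolding AT_def by (intro sum.cong refl) (simp add: blk_restr_Y)

lemma x_partial_sweep: "k \<le> l \<Longrightarrow> x (Suc t) k = x t l - (\<Sum>j\<in>{1..k}. transpose (A j) *v dy t j)"
proof (induction k)
  case 0
  then show ?case using x_start by simp
next
  case (Suc k)
  then show ?case using x_Suc_block[of "Suc k" t] by simp
qed

lemma x_last: "x t l = vbar - AT (Y t)"
proof (induction t)
  case 0
  have "Y 0 = 0" using Y_def y_init by simp
  then show ?case using x_init linear_0[OF linear_AT] by simp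
next
  case (Suc t)
  then show ?case
    using x_partial_sweep[of l t]
    by (simp add: AT_Y dy_def matrix_vector_mult_diff_distrib sum_subtractf)
qed

lemma x_before_block:
  "i \<in> {1..l} \<Longrightarrow> x (Suc t) (i - 1) = vbar - AT (Y t) - (\<Sum>j\<in>{1..i-1}. transpose (A j) *v dy t j)"
  using x_partial_sweep[of "i - 1" t] x_last by auto

text \<open>gam_i y_i^(t+1) = u - Proj (C i) u for the projected point u, so this is the variational
  inequality of the projection onto C_i.\<close>
lemma y_Suc_normal:
  assumes i: "i \<in> {1..l}" and c: "c \<in> C i"
  shows "inner (y (Suc t) i) (c - proj_pt t i) \<le> 0"
proof -
  define u where "u = gam i *\<^sub>R y t i + A i *v x (Suc t) (i - 1)"
  have "u - proj_pt t i = gam i *\<^sub>R y (Suc t) i"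
    using gam_dy[OF i, of t] by (simp add: u_def dy_def algebra_simps)
  moreover have "inner (u - proj_pt t i) (c - proj_pt t i) \<le> 0"
    unfolding proj_pt_def Proj_def u_def[symmetric]
    using C_closed C_convex C_ne i c
    by (intro any_closest_point_dot) (auto intro: closest_point_in_set closest_point_le)
  ultimately show ?thesis using gam_pos[OF i] by (simp add: mult_le_0_iff)
qed

definition supp_val :: "nat \<Rightarrow> nat \<Rightarrow> real" where
  "supp_val t i = (if t = 0 then 0 else inner (y t i) (proj_pt (t - 1) i))"

lemma support_fun_y: "i \<in> {1..l} \<Longrightarrow> support_fun (C i) (y t i) = ereal (supp_val t i)"
proof (cases t)
  case (Suc s)
  assume i: "i \<in> {1..l}"
  have "support_fun (C i) (y (Suc s) i) = ereal (inner (y (Suc s) i) (proj_pt s i))"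
    using proj_pt_in[OF i] y_Suc_normal[OF i]
    by (intro support_fun_attained) (auto simp: inner_diff_right)
  then show ?thesis by (simp add: Suc supp_val_def)
qed (simp add: supp_val_def y_init support_fun_zero C_ne)

lemma inner_y_proj_pt_le:
  assumes i: "i \<in> {1..l}"
  shows "inner (y t i) (proj_pt t i) \<le> supp_val t i"
  using support_fun_ge[OF proj_pt_in[OF i], of "y t i"] support_fun_y[OF i, of t] by simp

definition D :: "nat \<Rightarrow> real" where
  "D t = (1/2) * (norm (AT (Y t) - vbar))\<^sup>2 - (1/2) * (norm vbar)\<^sup>2 + (\<Sum>i\<in>{1..l}. supp_val t i)"

lemma d_Y: "d (Y t) = ereal (D t)"
proof -
  have "(\<Sum>i\<in>{1..l}. support_fun (C i) (blk_restr blk i (Y t))) = (\<Sum>i\<in>{1..l}. ereal (supp_val t i))"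
    by (intro sum.cong refl) (simp add: blk_restr_Y support_fun_y)
  then show ?thesis by (simp add: d_eq D_def sum_ereal)
qed

text \<open>The value of d at (y^(t+1)_1, ..., y^(t+1)_k, y^t_(k+1), ..., y^t_l), a point whose image
  under AT is vbar - x^(t+1)_k.\<close>
definition sweep_energy :: "nat \<Rightarrow> nat \<Rightarrow> real" where
  "sweep_energy t k = (1/2) * (norm (x (Suc t) k))\<^sup>2 - (1/2) * (norm vbar)\<^sup>2
     + (\<Sum>j\<in>{1..k}. supp_val (Suc t) j) + (\<Sum>j\<in>{Suc k..l}. supp_val t j)"

lemma sweep_energy_0: "sweep_energy t 0 = D t"
  unfolding sweep_energy_def D_def using x_start x_last by (simp add: norm_minus_commute)

lemma sweep_energy_l: "sweep_energy t l = D (Suc t)"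
  unfolding sweep_energy_def D_def using x_last[of "Suc t"] by (simp add: norm_minus_commute)

text \<open>One block update is a projected gradient step of length 1/gam_k on d: the choice of
  gam_k gives the descent, and the support function at y_k^t is at least its value at the new
  projection point.\<close>
lemma block_step_decrease:
  assumes k: "k \<in> {1..l}"
  shows "(1/2) * (norm (x (Suc t) k))\<^sup>2 + supp_val (Suc t) k + gam k / 2 * (norm (dy t k))\<^sup>2
    \<le> (1/2) * (norm (x (Suc t) (k - 1)))\<^sup>2 + supp_val t k"
proof -
  define x0 where "x0 = x (Suc t) (k - 1)"
  define p where "p = proj_pt t k"
  have x1: "x (Suc t) k = x0 - transpose (A k) *v dy t k"
    unfolding x0_def using x_Suc_block[OF k] .
  have "inner (dy t k) (A k *v x0) - inner (dy t k) p = inner (dy t k) (gam k *\<^sub>R dy t k)"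
    by (simp add: gam_dy[OF k] x0_def p_def inner_diff_right)
  then have "inner (dy t k) (A k *v x0) - inner (dy t k) p = gam k * (norm (dy t k))\<^sup>2"
    by (simp add: power2_norm_eq_inner)
  moreover have "supp_val (Suc t) k = inner (y t k + dy t k) p"
    by (simp add: supp_val_def p_def dy_def)
  moreover have "inner (y t k) p \<le> supp_val t k"
    unfolding p_def by (rule inner_y_proj_pt_le[OF k])
  moreover have "inner x0 (transpose (A k) *v dy t k) = inner (dy t k) (A k *v x0)"
    using inner_transpose_mult[of "A k" "dy t k" x0] by (simp add: inner_commute)
  ultimately have "(1/2) * (norm (x (Suc t) k))\<^sup>2 - (1/2) * (norm x0)\<^sup>2
      + supp_val (Suc t) k - supp_val t k
      \<le> (1/2) * (norm (transpose (A k) *v dy t k))\<^sup>2 - gam k * (norm (dy t k))\<^sup>2"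
    unfolding x1 by (simp add: power2_norm_eq_inner inner_diff_left inner_diff_right inner_add_left
        inner_commute algebra_simps)
  also have "\<dots> \<le> - gam k / 2 * (norm (dy t k))\<^sup>2"
    using norm_transpose_le_gam[OF k, of "dy t k"] by simp
  finally show ?thesis unfolding x0_def by simp
qed

lemma sweep_energy_step:
  assumes k: "k \<in> {1..l}"
  shows "sweep_energy t k + gam k / 2 * (norm (dy t k))\<^sup>2 \<le> sweep_energy t (k - 1)"
proof -
  obtain k' where k': "k = Suc k'" using k by (cases k) auto
  have "(\<Sum>j\<in>{Suc k'..l}. supp_val t j) = supp_val t k + (\<Sum>j\<in>{Suc k..l}. supp_val t j)"
    using k k' by (simp add: sum.atLeast_Suc_atMost)
  with block_step_decrease[OF k, of t] show ?thesis unfolding sweep_energy_def k' by simp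
qed

lemma sweep_energy_le:
  "k \<le> l \<Longrightarrow> sweep_energy t k + (\<Sum>j\<in>{1..k}. gam j / 2 * (norm (dy t j))\<^sup>2) \<le> sweep_energy t 0"
proof (induction k)
  case (Suc k)
  then show ?case using sweep_energy_step[of "Suc k" t] by simp
qed simp

definition descent :: "nat \<Rightarrow> real" where
  "descent t = (\<Sum>j\<in>{1..l}. gam j / 2 * (norm (dy t j))\<^sup>2)"

lemma descent_ge:
  assumes i: "i \<in> {1..l}"
  shows "gam i / 2 * (norm (dy t i))\<^sup>2 \<le> descent t"
  unfolding descent_def
proof (rule member_le_sum[OF i])
  fix j assume "j \<in> {1..l} - {i}"
  then show "0 \<le> gam j / 2 * (norm (dy t j))\<^sup>2" using gam_pos[of j] by simp
qed simp

lemma descent_nonneg: "descent t \<ge> 0"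
  unfolding descent_def
proof (rule sum_nonneg)
  fix j assume "j \<in> {1..l}"
  then show "0 \<le> gam j / 2 * (norm (dy t j))\<^sup>2" using gam_pos[of j] by simp
qed

lemma D_Suc_le: "D (Suc t) + descent t \<le> D t"
  using sweep_energy_le[of l t] sweep_energy_0 sweep_energy_l by (simp add: descent_def)

lemma decseq_D: "decseq D"
  using D_Suc_le descent_nonneg by (intro decseq_SucI) (smt (verit))

lemma D_0: "D 0 = 0"
  using Y_def y_init linear_0[OF linear_AT] by (simp add: D_def supp_val_def)

lemma D_le_0: "D t \<le> 0"
  using decseqD[OF decseq_D, of 0 t] D_0 by simp

lemma D_ge: "-(1/2) * (norm (vbar - x_slater))\<^sup>2 \<le> D t"
  using d_ge_weak_duality[of x_slater "Y t"] x_slater_feasible d_Y by simp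

lemma dy_tendsto_0: "i \<in> {1..l} \<Longrightarrow> (\<lambda>t. dy t i) \<longlonglongrightarrow> 0"
proof -
  assume i: "i \<in> {1..l}"
  have telescope: "(\<Sum>t<T. descent t) \<le> D 0 - D T" for T
  proof (induction T)
    case (Suc T)
    then show ?case using D_Suc_le[of T] by simp
  qed simp
  then have "(\<Sum>t<T. descent t) \<le> (1/2) * (norm (vbar - x_slater))\<^sup>2" for T
    using telescope[of T] D_ge[of T] D_0 by linarith
  then have "summable descent"
    using descent_nonneg by (intro summableI_nonneg_bounded)
  then have lim: "(\<lambda>t. (2 / gam i) * descent t) \<longlonglongrightarrow> 0"
    using tendsto_mult_right_zero summable_LIMSEQ_zero by blast
  have le: "(norm (dy t i))\<^sup>2 \<le> (2 / gam i) * descent t" for t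
    using descent_ge[OF i, of t] gam_pos[OF i] by (simp add: field_simps)
  have ev: "\<forall>\<^sub>F t in sequentially. (norm (dy t i))\<^sup>2 \<le> (2 / gam i) * descent t"
    by (intro always_eventually allI le)
  have "(\<lambda>t. (norm (dy t i))\<^sup>2) \<longlonglongrightarrow> 0"
    by (rule tendsto_sandwich[OF _ ev tendsto_const lim]) simp
  then have "(\<lambda>t. sqrt ((norm (dy t i))\<^sup>2)) \<longlonglongrightarrow> sqrt 0" by (rule tendsto_real_sqrt)
  then show ?thesis by (simp add: tendsto_norm_zero_iff)
qed

lemma feature_Y_bounded: "bounded (range (\<lambda>t. feature (Y t)))"
proof -
  obtain e where e: "e > 0"
    "\<And>z. ereal ((1/2) * (norm (AT z - vbar))\<^sup>2 - (1/2) * (norm vbar)\<^sup>2 + inner (AT z) x_slater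
       + e * norm (proj_dir z)) \<le> d z"
    using d_ge_coercive by blast
  define K where "K = (1/2) * (norm (vbar - x_slater))\<^sup>2"
  have "norm (feature (Y t)) \<le> (norm (vbar - x_slater) + sqrt (2 * K)) + K / e" for t
  proof -
    define u where "u = AT (Y t)"
    have "(1/2) * (norm (u - vbar))\<^sup>2 - (1/2) * (norm vbar)\<^sup>2 + inner u x_slater
        = (1/2) * (norm (u - (vbar - x_slater)))\<^sup>2 - K"
      unfolding K_def
      by (simp add: power2_norm_eq_inner inner_diff_left inner_diff_right inner_commute algebra_simps)
    then have bound: "(1/2) * (norm (u - (vbar - x_slater)))\<^sup>2 + e * norm (proj_dir (Y t)) \<le> K"
      using e(2)[of "Y t"] d_Y[of t] D_le_0[of t] unfolding u_def by simp
    then have "e * norm (proj_dir (Y t)) \<le> K"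
      using zero_le_power2[of "norm (u - (vbar - x_slater))"] by linarith
    then have "norm (proj_dir (Y t)) \<le> K / e" using e(1) by (simp add: field_simps)
    moreover have "0 \<le> e * norm (proj_dir (Y t))" using e(1) by simp
    then have "(norm (u - (vbar - x_slater)))\<^sup>2 \<le> 2 * K" using bound by linarith
    then have "norm (u - (vbar - x_slater)) \<le> sqrt (2 * K)" by (rule real_le_rsqrt)
    ultimately show ?thesis
      unfolding feature_def u_def[symmetric]
      using norm_triangle_ineq2[of u "vbar - x_slater"] norm_Pair_le[of u "proj_dir (Y t)"] by linarith
  qed
  then show ?thesis unfolding bounded_iff by blast
qed

lemma Y_Suc: "Y (Suc t) = Y t + (\<Sum>i\<in>{1..l}. dy t i)"
  using Y_def by (simp add: dy_def sum_subtractf)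

text \<open>D (t+1) through feature (Y (t+1)) and the projection points, so that it can be passed to
  the limit along a convergent subsequence of features.\<close>
lemma D_Suc_feature:
  "D (Suc t) = (1/2) * (norm (AT (Y (Suc t)) - vbar))\<^sup>2 - (1/2) * (norm vbar)\<^sup>2
    + inner (AT (Y (Suc t))) x_slater
    + (\<Sum>i\<in>{1..l}. inner (proj_dir (Y (Suc t))) (proj_pt t i - A i *v x_slater))"
proof -
  have "supp_val (Suc t) i = inner (blk_restr blk i (Y (Suc t))) (A i *v x_slater)
      + inner (proj_dir (Y (Suc t))) (proj_pt t i - A i *v x_slater)"
    if i: "i \<in> {1..l}" for i
  proof -
    have "supp_val (Suc t) i = inner (y (Suc t) i) (A i *v x_slater)
        + inner (y (Suc t) i) (proj_pt t i - A i *v x_slater)"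
      by (simp add: supp_val_def inner_diff_right)
    also have "inner (y (Suc t) i) (proj_pt t i - A i *v x_slater)
        = inner (proj_dir (Y (Suc t))) (proj_pt t i - A i *v x_slater)"
      using inner_blk_restr_diff[OF i proj_pt_in[OF i, of t] x_slater_feasible[OF i],
          where z = "Y (Suc t)"]
      by (simp add: blk_restr_Y[OF i])
    finally show ?thesis by (simp add: blk_restr_Y[OF i])
  qed
  then show ?thesis unfolding D_def by (simp add: sum.distrib inner_AT)
qed

context
  fixes tau :: "nat \<Rightarrow> nat" and zh :: "real^'m"
  assumes tau: "strict_mono tau"
    and feature_lim: "(\<lambda>k. feature (Y (tau k))) \<longlonglongrightarrow> feature zh"
begin

lemma dy_tau_tendsto_0: "i \<in> {1..l} \<Longrightarrow> (\<lambda>k. dy (tau k) i) \<longlonglongrightarrow> 0"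
  using LIMSEQ_subseq_LIMSEQ[OF dy_tendsto_0 tau] by (simp add: o_def)

lemma feature_Y_Suc_tau_tendsto: "(\<lambda>k. feature (Y (Suc (tau k)))) \<longlonglongrightarrow> feature zh"
proof -
  have "(\<lambda>k. \<Sum>i\<in>{1..l}. dy (tau k) i) \<longlonglongrightarrow> 0"
    by (intro tendsto_null_sum dy_tau_tendsto_0)
  then have "(\<lambda>k. feature (Y (tau k)) + feature (\<Sum>i\<in>{1..l}. dy (tau k) i)) \<longlonglongrightarrow> feature zh + feature 0"
    by (intro tendsto_add feature_lim bounded_linear.tendsto[OF bounded_linear_feature])
  then show ?thesis by (simp add: Y_Suc linear_add[OF linear_feature] linear_0[OF linear_feature])
qed

lemma x_before_tau_tendsto:
  assumes i: "i \<in> {1..l}"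
  shows "(\<lambda>k. x (Suc (tau k)) (i - 1)) \<longlonglongrightarrow> vbar - AT zh"
proof -
  have "(\<lambda>k. AT (Y (tau k))) \<longlonglongrightarrow> AT zh"
    using tendsto_fst[OF feature_lim] by (simp add: feature_def)
  moreover have "(\<lambda>k. transpose (A j) *v dy (tau k) j) \<longlonglongrightarrow> 0" if "j \<in> {1..i-1}" for j
  proof -
    have "j \<in> {1..l}" using i that by auto
    from bounded_linear.tendsto[OF matrix_vector_mul_bounded_linear dy_tau_tendsto_0[OF this]]
    show ?thesis by simp
  qed
  then have "(\<lambda>k. \<Sum>j\<in>{1..i-1}. transpose (A j) *v dy (tau k) j) \<longlonglongrightarrow> 0"
    by (rule tendsto_null_sum)
  ultimately have "(\<lambda>k. vbar - AT (Y (tau k)) - (\<Sum>j\<in>{1..i-1}. transpose (A j) *v dy (tau k) j))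
      \<longlonglongrightarrow> vbar - AT zh - 0"
    by (intro tendsto_diff tendsto_const)
  then show ?thesis using x_before_block[OF i] by simp
qed

lemma proj_pt_tau_tendsto:
  assumes i: "i \<in> {1..l}"
  shows "(\<lambda>k. proj_pt (tau k) i) \<longlonglongrightarrow> A i *v (vbar - AT zh)"
proof -
  have "(\<lambda>k. A i *v x (Suc (tau k)) (i - 1) - gam i *\<^sub>R dy (tau k) i)
      \<longlonglongrightarrow> A i *v (vbar - AT zh) - gam i *\<^sub>R 0"
    by (intro tendsto_diff tendsto_scaleR tendsto_const dy_tau_tendsto_0[OF i]
        bounded_linear.tendsto[OF matrix_vector_mul_bounded_linear x_before_tau_tendsto[OF i]])
  then show ?thesis using gam_dy[OF i] by (simp add: algebra_simps)
qed

lemma kkt_cluster: "kkt (feature zh)"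
proof -
  have feasible: "A i *v (vbar - AT zh) \<in> C i" if i: "i \<in> {1..l}" for i
    using closed_sequentially[OF _ _ proj_pt_tau_tendsto[OF i]] C_closed i proj_pt_in[OF i] by blast
  have "inner (proj_dir zh) (c - A i *v (vbar - AT zh)) \<le> 0" if i: "i \<in> {1..l}" and c: "c \<in> C i" for i c
  proof -
    have lim: "(\<lambda>k. inner (proj_dir (Y (Suc (tau k)))) (c - proj_pt (tau k) i))
        \<longlonglongrightarrow> inner (proj_dir zh) (c - A i *v (vbar - AT zh))"
      using tendsto_snd[OF feature_Y_Suc_tau_tendsto]
      by (intro tendsto_inner tendsto_diff tendsto_const proj_pt_tau_tendsto[OF i]) (simp add: feature_def)
    have le: "inner (proj_dir (Y (Suc (tau k)))) (c - proj_pt (tau k) i) \<le> 0" for k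
      using inner_blk_restr_diff[OF i c proj_pt_in[OF i], of "Y (Suc (tau k))"]
        y_Suc_normal[OF i c, of "tau k"] by (simp add: blk_restr_Y[OF i])
    show ?thesis by (rule LIMSEQ_le_const2[OF lim]) (use le in simp)
  qed
  with feasible show ?thesis unfolding kkt_def feature_def by simp
qed

lemma D_Suc_tau_tendsto: "(\<lambda>k. D (Suc (tau k))) \<longlonglongrightarrow> -(1/2) * (norm (AT zh))\<^sup>2"
proof -
  have AT_lim: "(\<lambda>k. AT (Y (Suc (tau k)))) \<longlonglongrightarrow> AT zh"
    and proj_lim: "(\<lambda>k. proj_dir (Y (Suc (tau k)))) \<longlonglongrightarrow> proj_dir zh"
    using tendsto_fst[OF feature_Y_Suc_tau_tendsto] tendsto_snd[OF feature_Y_Suc_tau_tendsto]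
    by (simp_all add: feature_def)
  have lim: "(\<lambda>k. D (Suc (tau k))) \<longlonglongrightarrow> (1/2) * (norm (AT zh - vbar))\<^sup>2 - (1/2) * (norm vbar)\<^sup>2
      + inner (AT zh) x_slater + (\<Sum>i\<in>{1..l}. inner (proj_dir zh) (A i *v (vbar - AT zh) - A i *v x_slater))"
    unfolding D_Suc_feature by (intro tendsto_intros AT_lim proj_lim proj_pt_tau_tendsto) simp_all
  have "inner (proj_dir zh) (A i *v (vbar - AT zh) - A i *v x_slater)
      = inner (blk_restr blk i zh) (A i *v (vbar - AT zh)) - inner (blk_restr blk i zh) (A i *v x_slater)"
    if i: "i \<in> {1..l}" for i
    using inner_blk_restr_diff[OF i _ x_slater_feasible[OF i]] kkt_cluster i
    by (simp add: kkt_def feature_def inner_diff_right)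
  then have sum_eq: "(\<Sum>i\<in>{1..l}. inner (proj_dir zh) (A i *v (vbar - AT zh) - A i *v x_slater))
      = inner (AT zh) (vbar - AT zh) - inner (AT zh) x_slater"
    by (simp add: sum_subtractf inner_AT)
  have "(1/2) * (norm (AT zh - vbar))\<^sup>2 - (1/2) * (norm vbar)\<^sup>2 + inner (AT zh) x_slater
      + (inner (AT zh) (vbar - AT zh) - inner (AT zh) x_slater) = -(1/2) * (norm (AT zh))\<^sup>2"
    by (simp add: power2_norm_eq_inner inner_diff_left inner_diff_right inner_commute algebra_simps)
  with lim show ?thesis unfolding sum_eq by simp
qed

end

lemma cluster_subsequence:
  fixes r :: "nat \<Rightarrow> nat"
  assumes "strict_mono r"
  shows "\<exists>r' zh. strict_mono r' \<and> (\<lambda>k. feature (Y (r (r' k)))) \<longlonglongrightarrow> feature zh"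
proof -
  have "bounded (range (\<lambda>k. feature (Y (r k))))"
    using feature_Y_bounded by (rule bounded_subset) auto
  then have "\<exists>q r'. strict_mono r' \<and> ((\<lambda>k. feature (Y (r k))) \<circ> r') \<longlonglongrightarrow> q"
    by (rule bounded_imp_convergent_subsequence)
  then obtain q r' where r': "strict_mono r'" and lim: "((\<lambda>k. feature (Y (r k))) \<circ> r') \<longlonglongrightarrow> q"
    by blast
  have "closed (range feature)"
    by (intro closed_subspace linear_subspace_image[OF linear_feature subspace_UNIV])
  then have "q \<in> range feature" by (rule closed_sequentially[OF _ _ lim]) simp
  with r' lim show ?thesis by (auto simp: o_def)
qed

lemma kkt_cluster_point:
  obtains r zh where "strict_mono r" "kkt (feature zh)"
    "(\<lambda>k. D (Suc (r k))) \<longlonglongrightarrow> -(1/2) * (norm (AT zh))\<^sup>2"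
proof -
  obtain r zh where r: "strict_mono r" and lim: "(\<lambda>k. feature (Y (r k))) \<longlonglongrightarrow> feature zh"
    using cluster_subsequence[OF strict_mono_id] by auto
  show ?thesis
    using that[OF r kkt_cluster[OF r lim] D_Suc_tau_tendsto[OF r lim]] .
qed

lemma Argmin_nonempty_and_d_Y_tendsto:
  shows "Argmin d \<noteq> {}" and "(\<lambda>t. d (Y t)) \<longlonglongrightarrow> (INF z. d z)"
proof -
  obtain r zh where r: "strict_mono r" and "kkt (feature zh)"
    and lim: "(\<lambda>k. D (Suc (r k))) \<longlonglongrightarrow> -(1/2) * (norm (AT zh))\<^sup>2"
    by (rule kkt_cluster_point)
  define m where "m = -(1/2) * (norm (AT zh))\<^sup>2"
  have "zh \<in> Argmin d" and dz: "d zh = ereal m"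
    using kkt_Argmin kkt_d_eq \<open>kkt (feature zh)\<close> unfolding m_def by blast+
  then show "Argmin d \<noteq> {}" by blast
  have min: "d zh \<le> d z" for z using \<open>zh \<in> Argmin d\<close> unfolding Argmin_def by blast
  have "(INF z. d z) \<le> d zh" by (rule INF_lower) simp
  moreover have "d zh \<le> (INF z. d z)" by (rule INF_greatest) (rule min)
  ultimately have "(INF z. d z) = ereal m" using dz by simp
  have "\<forall>t. m \<le> D t"
  proof
    fix t
    show "m \<le> D t" using min[of "Y t"] dz d_Y[of t] by simp
  qed
  then obtain L where L: "D \<longlonglongrightarrow> L" by (rule decseq_convergent[OF decseq_D])
  have "(\<lambda>k. D (Suc (r k))) \<longlonglongrightarrow> L"
    using LIMSEQ_subseq_LIMSEQ[OF L, of "Suc \<circ> r"] r by (simp add: strict_mono_def o_def)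
  then have "L = m" using lim unfolding m_def by (rule LIMSEQ_unique)
  with L \<open>(INF z. d z) = ereal m\<close> show "(\<lambda>t. d (Y t)) \<longlonglongrightarrow> (INF z. d z)"
    by (simp add: d_Y)
qed

lemma infdist_Y_Argmin_tendsto_0: "(\<lambda>t. infdist (Y t) (Argmin d)) \<longlonglongrightarrow> 0"
proof (rule LIMSEQ_if_subsubsequences)
  obtain G :: "(real^'n) \<times> (real^'m) \<Rightarrow> real^'m" where G: "bounded_linear G"
    "\<And>z z'. kkt (feature z') \<Longrightarrow> infdist z (Argmin d) \<le> norm (G (feature z - feature z'))"
    using infdist_Argmin_le by blast
  fix r :: "nat \<Rightarrow> nat" assume "strict_mono r"
  then obtain r' zh where r': "strict_mono r'" and lim: "(\<lambda>k. feature (Y (r (r' k)))) \<longlonglongrightarrow> feature zh"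
    using cluster_subsequence by blast
  have "strict_mono (\<lambda>k. r (r' k))"
    using strict_mono_o[OF \<open>strict_mono r\<close> r'] by (simp add: o_def)
  then have "kkt (feature zh)" using lim by (rule kkt_cluster)
  have "(\<lambda>k. norm (G (feature (Y (r (r' k))) - feature zh))) \<longlonglongrightarrow> norm (G (feature zh - feature zh))"
    by (intro tendsto_norm bounded_linear.tendsto[OF G(1)] tendsto_diff lim tendsto_const)
  then have G_lim: "(\<lambda>k. norm (G (feature (Y (r (r' k))) - feature zh))) \<longlonglongrightarrow> 0"
    using linear_0[OF bounded_linear.linear[OF G(1)]] by simp
  have ev: "\<forall>\<^sub>F k in sequentially.
      infdist (Y (r (r' k))) (Argmin d) \<le> norm (G (feature (Y (r (r' k))) - feature zh))"
    by (intro always_eventually allI G(2) \<open>kkt (feature zh)\<close>)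
  have "(\<lambda>k. infdist (Y (r (r' k))) (Argmin d)) \<longlonglongrightarrow> 0"
    by (rule tendsto_sandwich[OF _ ev tendsto_const G_lim]) (simp add: infdist_nonneg)
  with r' show "\<exists>r'. strict_mono r' \<and> (\<lambda>k. infdist (Y (r (r' k))) (Argmin d)) \<longlonglongrightarrow> 0" by blast
qed

end

theorem theorem3p4:
  fixes l :: nat
    and blk :: "'m::finite \<Rightarrow> nat"
    and C :: "nat \<Rightarrow> (real^'m) set"
    and A :: "nat \<Rightarrow> real^'n::finite^'m"
    and vbar :: "real^'n"
    and d :: "real^'m \<Rightarrow> ereal"
    and gam :: "nat \<Rightarrow> real"
    and x :: "nat \<Rightarrow> nat \<Rightarrow> real^'n"
    and y :: "nat \<Rightarrow> nat \<Rightarrow> real^'m"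
    and Y :: "nat \<Rightarrow> real^'m"
  assumes l_pos: "l \<ge> 1"
    and blk_range: "\<forall>j. blk j \<in> {1..l}"
    and blk_nonempty: "\<forall>i\<in>{1..l}. \<exists>j. blk j = i"
    and C_block: "\<forall>i\<in>{1..l}. C i \<subseteq> blk_space blk i"
    and C_ne: "\<forall>i\<in>{1..l}. C i \<noteq> {}"
    and C_closed: "\<forall>i\<in>{1..l}. closed (C i)"
    and C_convex: "\<forall>i\<in>{1..l}. convex (C i)"
    and A_block: "\<forall>i\<in>{1..l}. \<forall>j. blk j \<noteq> i \<longrightarrow> A i $ j = 0"
    and A_nz: "\<forall>i\<in>{1..l}. A i \<noteq> 0"
    and CQ: "(\<Inter>i\<in>{1..l}. {z. A i *v z \<in> rel_interior (C i)}) \<noteq> {}"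
    and d_def: "\<forall>yy. d yy = ereal ((1/2) * (norm ((\<Sum>i\<in>{1..l}. transpose (A i) *v blk_restr blk i yy) - vbar))\<^sup>2
                                  - (1/2) * (norm vbar)\<^sup>2)
                         + (\<Sum>i\<in>{1..l}. support_fun (C i) (blk_restr blk i yy))"
    and gam_def: "\<forall>i\<in>{1..l}. gam i = lambda_max (transpose (A i) ** A i)"
    and y_init: "\<forall>i\<in>{1..l}. y 0 i = 0"
    and x_init: "x 0 l = vbar"
    and x_start: "\<forall>t. x (Suc t) 0 = x t l"
    and x_step: "\<forall>t. \<forall>i\<in>{1..l}.
        x (Suc t) i = (x (Suc t) (i - 1) - (1 / gam i) *\<^sub>R (transpose (A i) *v (A i *v x (Suc t) (i - 1))))
          + (1 / gam i) *\<^sub>R (transpose (A i) *v Proj (C i) (gam i *\<^sub>R y t i + A i *v x (Suc t) (i - 1)))"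
    and y_step: "\<forall>t. \<forall>i\<in>{1..l}.
        y (Suc t) i = y t i + (1 / gam i) *\<^sub>R (A i *v x (Suc t) (i - 1))
          - (1 / gam i) *\<^sub>R Proj (C i) (gam i *\<^sub>R y t i + A i *v x (Suc t) (i - 1))"
    and Y_def: "\<forall>t. Y t = (\<Sum>i\<in>{1..l}. y t i)"
  shows "(\<lambda>t. d (Y t)) \<longlonglongrightarrow> (INF z. d z)
    \<and> Argmin d \<noteq> {}
    \<and> (\<lambda>t. infdist (Y t) (Argmin d)) \<longlonglongrightarrow> 0"
proof -
  interpret block_iteration l blk C A vbar d gam x y Y
    by unfold_locales (fact+)
  show ?thesis
    using Argmin_nonempty_and_d_Y_tendsto infdist_Y_Argmin_tendsto_0 by blast
qed

end
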